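(* Let $(P_n)_n$ be a sequence of pairwise distinct polynomials in $\mathbb{Z}[X_1,\dots,X_m]$ such that $\sup_n \deg P_n<\infty$. Then there exist complex numbers $\xi_1,\dots,\xi_m$, algebraically independent (over $\mathbb{Q}$), such that the sequence $(|P_n(\xi_1,\dots,\xi_m)|)_n$ is unbounded.
   Context: $\deg$ denotes total degree. *)

theory Defs
  imports Complex_Main "HOL-Library.Poly_Mapping"
begin

(* Multivariate polynomials with coefficients in 'a in the variables X_0, X_1, ...,
   represented (as in the AFP entry Polynomials) as finitely supported maps from
   monomials (finitely supported exponent vectors, nat =>0 nat) to coefficients. *)

definition mpoly_vars :: "((nat \<Rightarrow>\<^sub>0 nat) \<Rightarrow>\<^sub>0 'a::zero) \<Rightarrow> nat set" where
  "mpoly_vars p = (\<Union>\<alpha>\<in>Poly_Mapping.keys p. Poly_Mapping.keys \<alpha>)"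

definition mon_deg :: "(nat \<Rightarrow>\<^sub>0 nat) \<Rightarrow> nat" where
  "mon_deg \<alpha> = (\<Sum>i\<in>Poly_Mapping.keys \<alpha>. Poly_Mapping.lookup \<alpha> i)"

(* total degree; the zero polynomial gets degree 0 *)
definition total_deg :: "((nat \<Rightarrow>\<^sub>0 nat) \<Rightarrow>\<^sub>0 'a::zero) \<Rightarrow> nat" where
  "total_deg p = Max (insert 0 (mon_deg ` Poly_Mapping.keys p))"

definition mpoly_eval ::
  "('a::zero \<Rightarrow> 'b::comm_ring_1) \<Rightarrow> ((nat \<Rightarrow>\<^sub>0 nat) \<Rightarrow>\<^sub>0 'a) \<Rightarrow> (nat \<Rightarrow> 'b) \<Rightarrow> 'b" where
  "mpoly_eval c p xi = (\<Sum>\<alpha>\<in>Poly_Mapping.keys p. c (Poly_Mapping.lookup p \<alpha>) * (\<Prod>i\<in>Poly_Mapping.keys \<alpha>. xi i ^ Poly_Mapping.lookup \<alpha> i))"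

definition alg_indep_Q :: "nat \<Rightarrow> (nat \<Rightarrow> complex) \<Rightarrow> bool" where
  "alg_indep_Q m xi \<longleftrightarrow>
     (\<forall>p :: (nat \<Rightarrow>\<^sub>0 nat) \<Rightarrow>\<^sub>0 rat. p \<noteq> 0 \<longrightarrow> mpoly_vars p \<subseteq> {..<m} \<longrightarrow>
        mpoly_eval of_rat p xi \<noteq> 0)"

end

theory Submission
  imports
    Defs
    "HOL-Computational_Algebra.Polynomial"
    "HOL-Analysis.Continuum_Not_Denumerable"
    "HOL-Library.FuncSet"
begin

(* The monomials of degree at most D in m variables form a finite set M, so the coefficient
   vectors c_n of the P_n are pairwise distinct points of the lattice Z^M; hence their
   l1-norms tend to infinity. By compactness a subsequence of the normalised vectors
   c_n / |c_n| converges to some u <> 0. For any real point x with sum_a u_a x^a <> 0 the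
   values P_n(x) = |c_n| * <c_n / |c_n|, (x^a)_a> are then unbounded along that subsequence.
   Such an x can moreover be taken algebraically independent: it only has to avoid the zero
   sets of countably many nonzero real polynomials, which cannot cover R^m because a nonzero
   polynomial in one variable has finitely many roots and R is uncountable. *)

instance poly_mapping :: (countable, "{zero, countable}") countable
proof
  define graph where "graph p = (\<lambda>k. (k, Poly_Mapping.lookup p k)) ` Poly_Mapping.keys p"
    for p :: "'a \<Rightarrow>\<^sub>0 'b"
  have lookup_eq: "Poly_Mapping.lookup p k = Poly_Mapping.lookup q k"
    if "graph p = graph q" "Poly_Mapping.lookup p k \<noteq> 0" for p q k
  proof -
    have "(k, Poly_Mapping.lookup p k) \<in> graph p"
      using that(2) by (simp add: graph_def in_keys_iff)
    then have "(k, Poly_Mapping.lookup p k) \<in> graph q"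
      using that(1) by simp
    then show ?thesis by (auto simp: graph_def)
  qed
  have "inj graph"
    by (rule injI, rule poly_mapping_eqI) (metis lookup_eq)
  moreover have "countable (range graph)"
    by (rule countable_subset[OF _ countable_Collect_finite]) (auto simp: graph_def)
  ultimately show "\<exists>to_nat :: ('a \<Rightarrow>\<^sub>0 'b) \<Rightarrow> nat. inj to_nat"
    by (metis countable_def countable_image_inj_on)
qed

lemma inj_on_restrict_lookup:
  "inj_on (\<lambda>p. restrict (Poly_Mapping.lookup p) S) {p. Poly_Mapping.keys p \<subseteq> S}"
proof (rule inj_onI, rule poly_mapping_eqI)
  fix p q :: "'a \<Rightarrow>\<^sub>0 'b" and k
  assume "p \<in> {p. Poly_Mapping.keys p \<subseteq> S}" "q \<in> {p. Poly_Mapping.keys p \<subseteq> S}"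
    and "restrict (Poly_Mapping.lookup p) S = restrict (Poly_Mapping.lookup q) S"
  then show "Poly_Mapping.lookup p k = Poly_Mapping.lookup q k"
    by (cases "k \<in> S") (metis restrict_apply', metis in_keys_iff mem_Collect_eq subsetD)
qed

lemma lookup_le_mon_deg: "Poly_Mapping.lookup \<alpha> k \<le> mon_deg \<alpha>"
  unfolding mon_deg_def
  by (cases "k \<in> Poly_Mapping.keys \<alpha>") (auto intro: member_le_sum simp: in_keys_iff)

lemma finite_monomials_bounded_degree:
  "finite {\<alpha> :: nat \<Rightarrow>\<^sub>0 nat. Poly_Mapping.keys \<alpha> \<subseteq> {..<m} \<and> mon_deg \<alpha> \<le> D}"
  (is "finite ?S")
proof -
  let ?g = "\<lambda>\<alpha>. restrict (Poly_Mapping.lookup \<alpha>) {..<m}"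
  have "?g ` ?S \<subseteq> PiE {..<m} (\<lambda>_. {..D})"
  proof (clarsimp simp: restrict_PiE_iff)
    fix \<alpha> :: "nat \<Rightarrow>\<^sub>0 nat" and k
    assume "mon_deg \<alpha> \<le> D"
    with lookup_le_mon_deg[of \<alpha> k] show "Poly_Mapping.lookup \<alpha> k \<le> D" by simp
  qed
  then have "finite (?g ` ?S)"
    by (rule finite_subset) (intro finite_PiE; simp)
  moreover have "inj_on ?g ?S"
    by (rule inj_on_subset[OF inj_on_restrict_lookup]) auto
  ultimately show ?thesis
    by (rule finite_imageD)
qed

lemma keys_subset_monomials_bounded_degree:
  assumes "mpoly_vars p \<subseteq> {..<m}" and "total_deg p \<le> D"
  shows "Poly_Mapping.keys p \<subseteq> {\<alpha>. Poly_Mapping.keys \<alpha> \<subseteq> {..<m} \<and> mon_deg \<alpha> \<le> D}"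
proof
  fix \<alpha> assume \<alpha>: "\<alpha> \<in> Poly_Mapping.keys p"
  have "mon_deg \<alpha> \<le> total_deg p"
    unfolding total_deg_def using \<alpha> by (intro Max_ge) auto
  with \<alpha> assms show "\<alpha> \<in> {\<alpha>. Poly_Mapping.keys \<alpha> \<subseteq> {..<m} \<and> mon_deg \<alpha> \<le> D}"
    unfolding mpoly_vars_def by auto
qed

definition mon_eval :: "(nat \<Rightarrow>\<^sub>0 nat) \<Rightarrow> (nat \<Rightarrow> 'b::comm_ring_1) \<Rightarrow> 'b" where
  "mon_eval \<alpha> x = (\<Prod>i\<in>Poly_Mapping.keys \<alpha>. x i ^ Poly_Mapping.lookup \<alpha> i)"

lemma mon_eval_conv_prod_lessThan:
  assumes "Poly_Mapping.keys \<alpha> \<subseteq> {..<m}"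
  shows "mon_eval \<alpha> x = (\<Prod>j<m. x j ^ Poly_Mapping.lookup \<alpha> j)"
  unfolding mon_eval_def using assms
  by (intro prod.mono_neutral_left) (auto simp: in_keys_iff)

lemma mpoly_eval_conv_sum:
  assumes "finite A" and "Poly_Mapping.keys p \<subseteq> A" and "c 0 = 0"
  shows "mpoly_eval c p x = (\<Sum>\<alpha>\<in>A. c (Poly_Mapping.lookup p \<alpha>) * mon_eval \<alpha> x)"
  unfolding mpoly_eval_def mon_eval_def using assms
  by (intro sum.mono_neutral_left) (auto simp: in_keys_iff)

lemma mpoly_eval_of_real:
  fixes h :: "'a::zero \<Rightarrow> real" and x :: "nat \<Rightarrow> real"
  shows "mpoly_eval (\<lambda>v. of_real (h v)) p (\<lambda>i. of_real (x i)) =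
    (of_real (mpoly_eval h p x) :: 'b::{real_algebra_1, comm_ring_1})"
  by (simp add: mpoly_eval_def)

lemma norm_mpoly_eval_of_int_of_real:
  assumes "finite A" and "Poly_Mapping.keys p \<subseteq> A"
  shows "cmod (mpoly_eval of_int p (\<lambda>i. of_real (x i))) =
    \<bar>\<Sum>\<alpha>\<in>A. real_of_int (Poly_Mapping.lookup p \<alpha>) * mon_eval \<alpha> x\<bar>"
proof -
  have "cmod (mpoly_eval of_int p (\<lambda>i. of_real (x i))) = \<bar>mpoly_eval of_int p x\<bar>"
    using mpoly_eval_of_real[of real_of_int p x, where 'b = complex] by simp
  also have "mpoly_eval of_int p x = (\<Sum>\<alpha>\<in>A. real_of_int (Poly_Mapping.lookup p \<alpha>) * mon_eval \<alpha> x)"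
    using assms by (rule mpoly_eval_conv_sum) simp
  finally show ?thesis .
qed

lemma of_real_comp_of_rat: "(\<lambda>q. of_real (of_rat q)) = (of_rat :: rat \<Rightarrow> 'a::real_field)"
proof
  fix q :: rat
  show "of_real (of_rat q) = (of_rat q :: 'a)"
    by (cases q) (simp add: of_rat_rat)
qed

(* A i indexes the monomials of the i-th polynomial, E a j being the exponent of x j in
   monomial a. The last variable is fixed last: once x 0, ..., x (m - 1) keep the coefficient
   of t ^ E (a0 i) m nonzero for every i, the countably many univariate polynomials in t have
   only countably many roots in total. *)
lemma exists_common_non_root_exponents:
  fixes c :: "'i \<Rightarrow> 'b \<Rightarrow> real" and E :: "'b \<Rightarrow> nat \<Rightarrow> nat"
  assumes "countable I"
    and "\<And>i. i \<in> I \<Longrightarrow> finite (A i)"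
    and "\<And>i a b. i \<in> I \<Longrightarrow> a \<in> A i \<Longrightarrow> b \<in> A i \<Longrightarrow> (\<forall>j<m. E a j = E b j) \<Longrightarrow> a = b"
    and "\<And>i. i \<in> I \<Longrightarrow> \<exists>a\<in>A i. c i a \<noteq> 0"
  shows "\<exists>x. \<forall>i\<in>I. (\<Sum>a\<in>A i. c i a * (\<Prod>j<m. x j ^ E a j)) \<noteq> 0"
  using assms(2-4)
proof (induction m arbitrary: A)
  case 0
  show ?case
  proof (intro exI ballI)
    fix i assume i: "i \<in> I"
    obtain a where a: "a \<in> A i" "c i a \<noteq> 0" using "0.prems"(3)[OF i] by blast
    have "A i = {a}" using "0.prems"(2)[OF i] a(1) by blast
    with a show "(\<Sum>a\<in>A i. c i a * (\<Prod>j<0. (\<lambda>_. 0::real) j ^ E a j)) \<noteq> 0" by simp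
  qed
next
  case (Suc m)
  obtain a0 where a0: "\<And>i. i \<in> I \<Longrightarrow> a0 i \<in> A i \<and> c i (a0 i) \<noteq> 0"
    using Suc.prems(3) by metis
  define A' where "A' i = {a \<in> A i. E a m = E (a0 i) m}" for i
  have "\<exists>x. \<forall>i\<in>I. (\<Sum>a\<in>A' i. c i a * (\<Prod>j<m. x j ^ E a j)) \<noteq> 0"
  proof (rule Suc.IH)
    show "finite (A' i)" if "i \<in> I" for i
      using Suc.prems(1)[OF that] unfolding A'_def by simp
    show "a = b" if "i \<in> I" "a \<in> A' i" "b \<in> A' i" "\<forall>j<m. E a j = E b j" for i a b
      using Suc.prems(2)[of i a b] that unfolding A'_def by (auto simp: less_Suc_eq)
    show "\<exists>a\<in>A' i. c i a \<noteq> 0" if "i \<in> I" for i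
      using a0[OF that] unfolding A'_def by auto
  qed
  then obtain x where x: "\<And>i. i \<in> I \<Longrightarrow> (\<Sum>a\<in>A' i. c i a * (\<Prod>j<m. x j ^ E a j)) \<noteq> 0"
    by blast
  define q where "q i = (\<Sum>a\<in>A i. monom (c i a * (\<Prod>j<m. x j ^ E a j)) (E a m))" for i
  have "q i \<noteq> 0" if "i \<in> I" for i
  proof -
    have "coeff (q i) (E (a0 i) m) = (\<Sum>a\<in>A' i. c i a * (\<Prod>j<m. x j ^ E a j))"
      unfolding q_def coeff_sum coeff_monom A'_def using Suc.prems(1)[OF that]
      by (simp add: sum.inter_filter[symmetric] eq_commute)
    with x[OF that] show ?thesis
      by (metis coeff_0)
  qed
  then have "countable (\<Union>i\<in>I. {t. poly (q i) t = 0})"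
    by (intro countable_UN[OF \<open>countable I\<close>] countable_finite poly_roots_finite) auto
  then have "(\<Union>i\<in>I. {t. poly (q i) t = 0}) \<noteq> UNIV"
    using uncountable_UNIV_real by auto
  then obtain t where t: "t \<notin> (\<Union>i\<in>I. {t. poly (q i) t = 0})"
    by blast
  have eval_q: "(\<Sum>a\<in>A i. c i a * (\<Prod>j<Suc m. (x(m := t)) j ^ E a j)) = poly (q i) t" for i
    unfolding q_def poly_sum poly_monom
    by (intro sum.cong refl) (simp add: mult.assoc)
  show ?case
  proof (intro exI ballI)
    fix i assume "i \<in> I"
    with t show "(\<Sum>a\<in>A i. c i a * (\<Prod>j<Suc m. (x(m := t)) j ^ E a j)) \<noteq> 0"
      unfolding eval_q by blast
  qed
qed

lemma exists_common_non_root: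
  fixes c :: "'i \<Rightarrow> (nat \<Rightarrow>\<^sub>0 nat) \<Rightarrow> real"
  assumes "countable I"
    and "\<And>i. i \<in> I \<Longrightarrow> finite (A i)"
    and "\<And>i \<alpha>. i \<in> I \<Longrightarrow> \<alpha> \<in> A i \<Longrightarrow> Poly_Mapping.keys \<alpha> \<subseteq> {..<m}"
    and "\<And>i. i \<in> I \<Longrightarrow> \<exists>\<alpha>\<in>A i. c i \<alpha> \<noteq> 0"
  shows "\<exists>x. \<forall>i\<in>I. (\<Sum>\<alpha>\<in>A i. c i \<alpha> * mon_eval \<alpha> x) \<noteq> 0"
proof -
  have "\<exists>x. \<forall>i\<in>I. (\<Sum>\<alpha>\<in>A i. c i \<alpha> * (\<Prod>j<m. x j ^ Poly_Mapping.lookup \<alpha> j)) \<noteq> 0"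
  proof (rule exists_common_non_root_exponents[OF assms(1,2) _ assms(4)])
    fix i \<alpha> \<beta> assume "i \<in> I" "\<alpha> \<in> A i" "\<beta> \<in> A i"
      and "\<forall>j<m. Poly_Mapping.lookup \<alpha> j = Poly_Mapping.lookup \<beta> j"
    then have "restrict (Poly_Mapping.lookup \<alpha>) {..<m} = restrict (Poly_Mapping.lookup \<beta>) {..<m}"
      by auto
    with assms(3) \<open>i \<in> I\<close> \<open>\<alpha> \<in> A i\<close> \<open>\<beta> \<in> A i\<close> show "\<alpha> = \<beta>"
      by (auto intro: inj_onD[OF inj_on_restrict_lookup])
  qed
  then obtain x where x: "\<forall>i\<in>I. (\<Sum>\<alpha>\<in>A i. c i \<alpha> * (\<Prod>j<m. x j ^ Poly_Mapping.lookup \<alpha> j)) \<noteq> 0"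
    by blast
  show ?thesis
  proof (intro exI ballI)
    fix i assume "i \<in> I"
    then have "(\<Sum>\<alpha>\<in>A i. c i \<alpha> * mon_eval \<alpha> x) =
        (\<Sum>\<alpha>\<in>A i. c i \<alpha> * (\<Prod>j<m. x j ^ Poly_Mapping.lookup \<alpha> j))"
      using assms(3) by (intro sum.cong refl) (simp add: mon_eval_conv_prod_lessThan)
    also have "\<dots> \<noteq> 0"
      using x \<open>i \<in> I\<close> by (rule bspec)
    finally show "(\<Sum>\<alpha>\<in>A i. c i \<alpha> * mon_eval \<alpha> x) \<noteq> 0" .
  qed
qed

lemma finite_family_convergent_subsequence:
  fixes f :: "nat \<Rightarrow> 'a \<Rightarrow> real"
  assumes "finite M" and "\<And>n \<alpha>. \<alpha> \<in> M \<Longrightarrow> \<bar>f n \<alpha>\<bar> \<le> B"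
  obtains r u where "strict_mono r" and "\<And>\<alpha>. \<alpha> \<in> M \<Longrightarrow> (\<lambda>k. f (r k) \<alpha>) \<longlonglongrightarrow> u \<alpha>"
proof -
  from assms have "\<exists>r u. strict_mono r \<and> (\<forall>\<alpha>\<in>M. (\<lambda>k. f (r k) \<alpha>) \<longlonglongrightarrow> u \<alpha>)"
  proof (induction M rule: finite_induct)
    case empty
    show ?case by (intro exI[of _ id]) (auto simp: strict_mono_def)
  next
    case (insert a M)
    have "\<exists>r u. strict_mono r \<and> (\<forall>\<alpha>\<in>M. (\<lambda>k. f (r k) \<alpha>) \<longlonglongrightarrow> u \<alpha>)"
      using insert.prems by (intro insert.IH) auto
    then obtain r u where r: "strict_mono r" and u: "\<forall>\<alpha>\<in>M. (\<lambda>k. f (r k) \<alpha>) \<longlonglongrightarrow> u \<alpha>"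
      by blast
    obtain s where s: "strict_mono s" and mono: "monoseq (\<lambda>n. f (r (s n)) a)"
      using seq_monosub[of "\<lambda>k. f (r k) a"] by blast
    have "Bseq (\<lambda>n. f (r (s n)) a)"
      using insert.prems by (intro BseqI'[of _ B]) auto
    then obtain L where L: "(\<lambda>n. f (r (s n)) a) \<longlonglongrightarrow> L"
      using Bseq_monoseq_convergent[OF _ mono] unfolding convergent_def by blast
    show ?case
    proof (intro exI conjI ballI)
      show "strict_mono (r \<circ> s)"
        using r s by (rule strict_mono_o)
      fix \<alpha> assume "\<alpha> \<in> insert a M"
      then show "(\<lambda>k. f ((r \<circ> s) k) \<alpha>) \<longlonglongrightarrow> (u(a := L)) \<alpha>"
      proof
        assume "\<alpha> = a"
        with L show ?thesis by simp
      next
        assume "\<alpha> \<in> M"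
        with u have "((\<lambda>k. f (r k) \<alpha>) \<circ> s) \<longlonglongrightarrow> u \<alpha>"
          using s by (intro LIMSEQ_subseq_LIMSEQ) auto
        with \<open>\<alpha> \<in> M\<close> \<open>a \<notin> M\<close> show ?thesis
          by (auto simp: comp_def)
      qed
    qed
  qed
  then obtain r u where r: "strict_mono r" and u: "\<forall>\<alpha>\<in>M. (\<lambda>k. f (r k) \<alpha>) \<longlonglongrightarrow> u \<alpha>"
    by blast
  show thesis
    by (rule that[OF r]) (use u in blast)
qed

lemma distinct_int_vectors_norm_at_top:
  fixes c :: "nat \<Rightarrow> 'a \<Rightarrow> int"
  assumes "finite M" and "inj (\<lambda>n. restrict (c n) M)"
  shows "filterlim (\<lambda>n. \<Sum>\<alpha>\<in>M. \<bar>real_of_int (c n \<alpha>)\<bar>) at_top sequentially"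
  unfolding filterlim_at_top
proof
  fix B :: real
  define K where "K = \<lceil>B\<rceil>"
  have "{n. \<not> B \<le> (\<Sum>\<alpha>\<in>M. \<bar>real_of_int (c n \<alpha>)\<bar>)} \<subseteq>
      (\<lambda>n. restrict (c n) M) -` PiE M (\<lambda>_. {-K..K})"
  proof
    fix n assume small: "n \<in> {n. \<not> B \<le> (\<Sum>\<alpha>\<in>M. \<bar>real_of_int (c n \<alpha>)\<bar>)}"
    have "c n \<alpha> \<in> {-K..K}" if "\<alpha> \<in> M" for \<alpha>
    proof -
      have "\<bar>real_of_int (c n \<alpha>)\<bar> \<le> (\<Sum>\<alpha>\<in>M. \<bar>real_of_int (c n \<alpha>)\<bar>)"
        using \<open>finite M\<close> that by (intro member_le_sum) auto
      with small show ?thesis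
        unfolding K_def by (simp add: abs_le_iff) linarith
    qed
    then show "n \<in> (\<lambda>n. restrict (c n) M) -` PiE M (\<lambda>_. {-K..K})"
      by (simp add: restrict_PiE_iff)
  qed
  moreover have "finite ((\<lambda>n. restrict (c n) M) -` PiE M (\<lambda>_. {-K..K}))"
    using \<open>finite M\<close> assms(2) by (intro finite_vimageI finite_PiE) auto
  ultimately have "finite {n. \<not> B \<le> (\<Sum>\<alpha>\<in>M. \<bar>real_of_int (c n \<alpha>)\<bar>)}"
    by (rule finite_subset)
  then show "eventually (\<lambda>n. B \<le> (\<Sum>\<alpha>\<in>M. \<bar>real_of_int (c n \<alpha>)\<bar>)) sequentially"
    by (simp add: cofinite_eq_sequentially[symmetric] eventually_cofinite)
qed

lemma unbounded_linear_forms: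
  fixes c :: "nat \<Rightarrow> 'a \<Rightarrow> real"
  assumes "finite M" and norm_at_top: "filterlim (\<lambda>n. \<Sum>\<alpha>\<in>M. \<bar>c n \<alpha>\<bar>) at_top sequentially"
  obtains u where "\<exists>\<alpha>\<in>M. u \<alpha> \<noteq> 0"
    and "\<And>w. (\<Sum>\<alpha>\<in>M. u \<alpha> * w \<alpha>) \<noteq> 0 \<Longrightarrow> \<not> bdd_above (range (\<lambda>n. \<bar>\<Sum>\<alpha>\<in>M. c n \<alpha> * w \<alpha>\<bar>))"
proof -
  define N where "N n = (\<Sum>\<alpha>\<in>M. \<bar>c n \<alpha>\<bar>)" for n
  define f where "f n \<alpha> = c n \<alpha> / N n" for n \<alpha>
  have "\<bar>f n \<alpha>\<bar> \<le> 1" if "\<alpha> \<in> M" for n \<alpha>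
  proof -
    have "\<bar>c n \<alpha>\<bar> \<le> N n"
      unfolding N_def using \<open>finite M\<close> that by (intro member_le_sum) auto
    then show ?thesis
      unfolding f_def by (auto simp: abs_divide divide_le_eq_1)
  qed
  then obtain r u where r: "strict_mono r" and ru: "\<And>\<alpha>. \<alpha> \<in> M \<Longrightarrow> (\<lambda>k. f (r k) \<alpha>) \<longlonglongrightarrow> u \<alpha>"
    using finite_family_convergent_subsequence[OF \<open>finite M\<close>] by metis
  have N_r: "filterlim (\<lambda>k. N (r k)) at_top sequentially"
    using filterlim_compose[OF norm_at_top filterlim_subseq[OF r]] unfolding N_def .
  then have N_r_pos: "eventually (\<lambda>k. 0 < N (r k)) sequentially"
    by (simp add: filterlim_at_top_dense)
  show thesis
  proof
    have "(\<lambda>k. \<Sum>\<alpha>\<in>M. \<bar>f (r k) \<alpha>\<bar>) \<longlonglongrightarrow> (\<Sum>\<alpha>\<in>M. \<bar>u \<alpha>\<bar>)"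
      by (intro tendsto_intros ru)
    moreover have "eventually (\<lambda>k. (\<Sum>\<alpha>\<in>M. \<bar>f (r k) \<alpha>\<bar>) = 1) sequentially"
      using N_r_pos
      by eventually_elim (simp add: f_def abs_divide N_def sum_divide_distrib[symmetric])
    then have "(\<lambda>k. \<Sum>\<alpha>\<in>M. \<bar>f (r k) \<alpha>\<bar>) \<longlonglongrightarrow> 1"
      by (rule tendsto_eventually)
    ultimately have "(\<Sum>\<alpha>\<in>M. \<bar>u \<alpha>\<bar>) = 1"
      by (rule LIMSEQ_unique)
    then show "\<exists>\<alpha>\<in>M. u \<alpha> \<noteq> 0"
      by (rule contrapos_pp) simp
  next
    fix w assume L: "(\<Sum>\<alpha>\<in>M. u \<alpha> * w \<alpha>) \<noteq> 0"
    have "(\<lambda>k. \<bar>\<Sum>\<alpha>\<in>M. f (r k) \<alpha> * w \<alpha>\<bar>) \<longlonglongrightarrow> \<bar>\<Sum>\<alpha>\<in>M. u \<alpha> * w \<alpha>\<bar>"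
      by (intro tendsto_intros ru)
    then have lim: "filterlim (\<lambda>k. \<bar>\<Sum>\<alpha>\<in>M. f (r k) \<alpha> * w \<alpha>\<bar> * N (r k)) at_top sequentially"
      using L N_r by (intro filterlim_tendsto_pos_mult_at_top) auto
    have "eventually (\<lambda>k. \<bar>\<Sum>\<alpha>\<in>M. f (r k) \<alpha> * w \<alpha>\<bar> * N (r k) =
        \<bar>\<Sum>\<alpha>\<in>M. c (r k) \<alpha> * w \<alpha>\<bar>) sequentially"
      using N_r_pos
      by eventually_elim (simp add: f_def sum_divide_distrib[symmetric] abs_divide)
    from filterlim_cong[OF refl refl this] lim
    have "filterlim (\<lambda>k. \<bar>\<Sum>\<alpha>\<in>M. c (r k) \<alpha> * w \<alpha>\<bar>) at_top sequentially"
      by simp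
    then have above: "eventually (\<lambda>k. K < \<bar>\<Sum>\<alpha>\<in>M. c (r k) \<alpha> * w \<alpha>\<bar>) sequentially" for K
      by (simp add: filterlim_at_top_dense)
    show "\<not> bdd_above (range (\<lambda>n. \<bar>\<Sum>\<alpha>\<in>M. c n \<alpha> * w \<alpha>\<bar>))"
    proof
      assume "bdd_above (range (\<lambda>n. \<bar>\<Sum>\<alpha>\<in>M. c n \<alpha> * w \<alpha>\<bar>))"
      then obtain K where K: "\<And>n. \<bar>\<Sum>\<alpha>\<in>M. c n \<alpha> * w \<alpha>\<bar> \<le> K"
        by (auto simp: bdd_above_def)
      obtain k where "K < \<bar>\<Sum>\<alpha>\<in>M. c (r k) \<alpha> * w \<alpha>\<bar>"
        using eventually_happens'[OF sequentially_bot above] by blast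
      with K[of "r k"] show False by linarith
    qed
  qed
qed

lemma exists_alg_indep_point_avoiding:
  fixes u :: "(nat \<Rightarrow>\<^sub>0 nat) \<Rightarrow> real"
  assumes "finite M" and M_vars: "\<And>\<alpha>. \<alpha> \<in> M \<Longrightarrow> Poly_Mapping.keys \<alpha> \<subseteq> {..<m}"
    and "\<exists>\<alpha>\<in>M. u \<alpha> \<noteq> 0"
  obtains x :: "nat \<Rightarrow> real"
  where "alg_indep_Q m (\<lambda>i. of_real (x i))" and "(\<Sum>\<alpha>\<in>M. u \<alpha> * mon_eval \<alpha> x) \<noteq> 0"
proof -
  define Q where "Q = {p :: (nat \<Rightarrow>\<^sub>0 nat) \<Rightarrow>\<^sub>0 rat. p \<noteq> 0 \<and> mpoly_vars p \<subseteq> {..<m}}"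
  define F where "F = insert (M, u) ((\<lambda>p. (Poly_Mapping.keys p, \<lambda>\<alpha>. real_of_rat (Poly_Mapping.lookup p \<alpha>))) ` Q)"
  have "\<exists>x. \<forall>i\<in>F. (\<Sum>\<alpha>\<in>fst i. snd i \<alpha> * mon_eval \<alpha> x) \<noteq> 0"
  proof (rule exists_common_non_root)
    show "countable F"
      by (auto simp: F_def intro: countable_image)
    show "finite (fst i)" if "i \<in> F" for i
      using that \<open>finite M\<close> by (auto simp: F_def)
    show "Poly_Mapping.keys \<alpha> \<subseteq> {..<m}" if "i \<in> F" "\<alpha> \<in> fst i" for i \<alpha>
      using that M_vars by (fastforce simp: F_def Q_def mpoly_vars_def)
    show "\<exists>\<alpha>\<in>fst i. snd i \<alpha> \<noteq> 0" if "i \<in> F" for i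
      using that assms(3) by (auto simp: F_def Q_def in_keys_iff simp flip: keys_eq_empty)
  qed
  then obtain x where x: "\<forall>i\<in>F. (\<Sum>\<alpha>\<in>fst i. snd i \<alpha> * mon_eval \<alpha> x) \<noteq> 0"
    by blast
  show thesis
  proof
    show "alg_indep_Q m (\<lambda>i. of_real (x i))"
      unfolding alg_indep_Q_def
    proof (intro allI impI)
      fix p :: "(nat \<Rightarrow>\<^sub>0 nat) \<Rightarrow>\<^sub>0 rat"
      assume "p \<noteq> 0" and "mpoly_vars p \<subseteq> {..<m}"
      then have "(Poly_Mapping.keys p, \<lambda>\<alpha>. real_of_rat (Poly_Mapping.lookup p \<alpha>)) \<in> F"
        by (simp add: F_def Q_def)
      from bspec[OF x this]
      have "mpoly_eval of_rat p x \<noteq> 0"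
        by (subst mpoly_eval_conv_sum[of "Poly_Mapping.keys p"]) simp_all
      then show "mpoly_eval of_rat p (\<lambda>i. complex_of_real (x i)) \<noteq> 0"
        unfolding mpoly_eval_of_real[of real_of_rat, where 'b = complex, unfolded of_real_comp_of_rat]
        by simp
    qed
    show "(\<Sum>\<alpha>\<in>M. u \<alpha> * mon_eval \<alpha> x) \<noteq> 0"
      using x by (simp add: F_def)
  qed
qed

theorem proposition2p6:
  fixes m :: nat and P :: "nat \<Rightarrow> (nat \<Rightarrow>\<^sub>0 nat) \<Rightarrow>\<^sub>0 int"
  assumes distinct: "inj P"
    and vars: "\<And>n. mpoly_vars (P n) \<subseteq> {..<m}"
    and deg: "\<exists>D. \<forall>n. total_deg (P n) \<le> D"
  shows "\<exists>xi :: nat \<Rightarrow> complex. alg_indep_Q m xi \<and>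
           \<not> bdd_above (range (\<lambda>n. cmod (mpoly_eval of_int (P n) xi)))"
proof -
  obtain D where D: "\<And>n. total_deg (P n) \<le> D"
    using deg by blast
  define M where "M = {\<alpha> :: nat \<Rightarrow>\<^sub>0 nat. Poly_Mapping.keys \<alpha> \<subseteq> {..<m} \<and> mon_deg \<alpha> \<le> D}"
  have "finite M"
    unfolding M_def by (rule finite_monomials_bounded_degree)
  have keys_P: "Poly_Mapping.keys (P n) \<subseteq> M" for n
    unfolding M_def using vars D by (rule keys_subset_monomials_bounded_degree)
  have "inj (\<lambda>n. restrict (Poly_Mapping.lookup (P n)) M)"
    using comp_inj_on[OF distinct inj_on_subset[OF inj_on_restrict_lookup]] keys_P
    by (auto simp: comp_def)
  with \<open>finite M\<close> have norm:
    "filterlim (\<lambda>n. \<Sum>\<alpha>\<in>M. \<bar>real_of_int (Poly_Mapping.lookup (P n) \<alpha>)\<bar>) at_top sequentially"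
    by (rule distinct_int_vectors_norm_at_top)
  obtain u where "\<exists>\<alpha>\<in>M. u \<alpha> \<noteq> 0" and unbounded:
    "\<And>w. (\<Sum>\<alpha>\<in>M. u \<alpha> * w \<alpha>) \<noteq> 0 \<Longrightarrow>
      \<not> bdd_above (range (\<lambda>n. \<bar>\<Sum>\<alpha>\<in>M. real_of_int (Poly_Mapping.lookup (P n) \<alpha>) * w \<alpha>\<bar>))"
    by (rule unbounded_linear_forms[OF \<open>finite M\<close> norm]) blast
  then obtain x where indep: "alg_indep_Q m (\<lambda>i. of_real (x i))"
    and off: "(\<Sum>\<alpha>\<in>M. u \<alpha> * mon_eval \<alpha> x) \<noteq> 0"
    using \<open>finite M\<close> by (elim exists_alg_indep_point_avoiding) (auto simp: M_def)
  show ?thesis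
    using indep unbounded[OF off]
    by (intro exI[of _ "\<lambda>i. of_real (x i)"])
      (simp add: norm_mpoly_eval_of_int_of_real[OF \<open>finite M\<close> keys_P])
qed

end
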